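(* Assume that (H1)-(H2) hold, $\widetilde{\mathcal{L}}$ is compact and $k_{w}(x,\cdot)\in L^2(pw)$ for a certain $x\in ]a,b[$. For all $g_0=\sum_{i=1}^{\infty}a_i e_i\in E^2(p,w)$ with $a_1=\mathbb{E}_p[g_0 e_1w]\neq 0$, we have \begin{equation*} \left|\frac{\widetilde{\mathcal{L}} ^{n+1} g_0}{\widetilde{\mathcal{L}} ^n g_0}(x)-C(p,w)\right|\leq 2\left(\frac{|a_1e_1(x)|}{B_n(x)}-\frac{1}{C(p,w)}\right)^{-1} \end{equation*} for all $n\in\mathbb{N}$ such that $B_n(x)< C(p,w)|a_1e_1(x)|$, where \begin{equation*} B_n(x):=\left\|k_w(x,\cdot)\right\|_{L^2(pw)}\left\|g_0-a_1e_1\right\|_{L^2(pw)}\left(\frac{\kappa_2}{C(p,w)}\right)^{n-1}. \end{equation*}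
   Context: Let $-\infty\le a<b\le\infty$, $p$ a probability density on $]a,b[$ with $p>0$ a.e., $w\in L^1_{\text{loc}}(]a,b[)$ a weight with $w>0$ a.e. and $pw\in L^1_{\text{loc}}$. Let $P(x)=\int_a^x p$, $\bar P=1-P$, $K(x,y)=P(x\wedge y)\bar P(x\vee y)$, $k(x,y)=K(x,y)/(p(x)p(y))$, $k_w(x,y)=k(x,y)/(w(x)w(y))$. $C(p,w)$ is the smallest $C$ with $\mathrm{Var}_p[h]\le C\,\mathbb{E}_p[|h'|^2w]$ for all weakly differentiable $h\in L^2(p)$ with $h'\in L^2(pw)$. Hypotheses: (H1) $C(p,w)<\infty$; (H2) $L^2(pw)\subset L^1_{\text{loc}}(]a,b[)$. $E^2(p,w)=\{f\in L^2(pw)\cap L^1_{\text{loc}}: x\mapsto\int_{x_0}^x f\in L^2(p)\}$ with $L^2(pw)$ norm. $\widetilde{\mathcal{L}} f(x)=\frac{1}{p(x)w(x)}\int_a^b K(x,y)f(y)\,dy$ with iterates $\widetilde{\mathcal{L}}^{n+1}=\widetilde{\mathcal{L}}(\widetilde{\mathcal{L}}^n)$. When compact, its eigenvalues $\kappa_1\ge\kappa_2\ge\dots>0$ tend to $0$, $\kappa_1=C(p,w)$, with orthonormal eigenbasis $\{e_i\}$ of $E^2(p,w)$ and $a_i=\mathbb{E}_p[g_0e_iw]$. *)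

theory Defs
  imports "HOL-Analysis.Analysis"
begin

definition locint :: "ereal \<Rightarrow> ereal \<Rightarrow> (real \<Rightarrow> real) \<Rightarrow> bool" where
  "locint a b f \<longleftrightarrow> (\<forall>c d. c \<in> einterval a b \<longrightarrow> d \<in> einterval a b \<longrightarrow>
       set_integrable lborel {c..d} f)"

definition is_prob_density :: "ereal \<Rightarrow> ereal \<Rightarrow> (real \<Rightarrow> real) \<Rightarrow> bool" where
  "is_prob_density a b p \<longleftrightarrow> a < b \<and> p \<in> borel_measurable borel \<and>
     set_integrable lborel (einterval a b) p \<and>
     (LINT x:einterval a b|lborel. p x) = 1 \<and>
     (AE x in lborel. x \<in> einterval a b \<longrightarrow> p x > 0)"

definition is_weight :: "ereal \<Rightarrow> ereal \<Rightarrow> (real \<Rightarrow> real) \<Rightarrow> (real \<Rightarrow> real) \<Rightarrow> bool" where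
  "is_weight a b p w \<longleftrightarrow> w \<in> borel_measurable borel \<and> locint a b w \<and>
     (AE x in lborel. x \<in> einterval a b \<longrightarrow> w x > 0) \<and> locint a b (\<lambda>x. p x * w x)"

definition L2p :: "ereal \<Rightarrow> ereal \<Rightarrow> (real \<Rightarrow> real) \<Rightarrow> (real \<Rightarrow> real) \<Rightarrow> bool" where
  "L2p a b p h \<longleftrightarrow> h \<in> borel_measurable borel \<and>
     set_integrable lborel (einterval a b) (\<lambda>x. (h x)\<^sup>2 * p x)"

definition L2pw :: "ereal \<Rightarrow> ereal \<Rightarrow> (real \<Rightarrow> real) \<Rightarrow> (real \<Rightarrow> real) \<Rightarrow> (real \<Rightarrow> real) \<Rightarrow> bool" where
  "L2pw a b p w f \<longleftrightarrow> f \<in> borel_measurable borel \<and>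
     set_integrable lborel (einterval a b) (\<lambda>x. (f x)\<^sup>2 * p x * w x)"

definition ipw :: "ereal \<Rightarrow> ereal \<Rightarrow> (real \<Rightarrow> real) \<Rightarrow> (real \<Rightarrow> real) \<Rightarrow> (real \<Rightarrow> real) \<Rightarrow> (real \<Rightarrow> real) \<Rightarrow> real" where
  "ipw a b p w f g = (LINT x:einterval a b|lborel. f x * g x * p x * w x)"

definition normpw :: "ereal \<Rightarrow> ereal \<Rightarrow> (real \<Rightarrow> real) \<Rightarrow> (real \<Rightarrow> real) \<Rightarrow> (real \<Rightarrow> real) \<Rightarrow> real" where
  "normpw a b p w f = sqrt (LINT x:einterval a b|lborel. (f x)\<^sup>2 * p x * w x)"

definition var_p :: "ereal \<Rightarrow> ereal \<Rightarrow> (real \<Rightarrow> real) \<Rightarrow> (real \<Rightarrow> real) \<Rightarrow> real" where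
  "var_p a b p h = (LINT x:einterval a b|lborel. (h x)\<^sup>2 * p x)
                   - (LINT x:einterval a b|lborel. h x * p x)\<^sup>2"

definition weak_deriv :: "ereal \<Rightarrow> ereal \<Rightarrow> (real \<Rightarrow> real) \<Rightarrow> (real \<Rightarrow> real) \<Rightarrow> bool" where
  "weak_deriv a b h h' \<longleftrightarrow> locint a b h \<and> locint a b h' \<and>
     (\<forall>\<phi> \<phi>'. (\<forall>x. (\<phi> has_real_derivative \<phi>' x) (at x)) \<and> continuous_on UNIV \<phi>' \<and>
        (\<exists>c d. c \<in> einterval a b \<and> d \<in> einterval a b \<and> (\<forall>x. x \<notin> {c..d} \<longrightarrow> \<phi> x = 0)) \<longrightarrow>
        (LINT x:einterval a b|lborel. h x * \<phi>' x) = - (LINT x:einterval a b|lborel. h' x * \<phi> x))"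

definition poincare_const :: "ereal \<Rightarrow> ereal \<Rightarrow> (real \<Rightarrow> real) \<Rightarrow> (real \<Rightarrow> real) \<Rightarrow> real \<Rightarrow> bool" where
  "poincare_const a b p w C \<longleftrightarrow>
     (\<forall>h h'. L2p a b p h \<and> weak_deriv a b h h' \<and> L2pw a b p w h' \<longrightarrow>
        var_p a b p h \<le> C * (LINT x:einterval a b|lborel. (h' x)\<^sup>2 * p x * w x))"

definition Cpw :: "ereal \<Rightarrow> ereal \<Rightarrow> (real \<Rightarrow> real) \<Rightarrow> (real \<Rightarrow> real) \<Rightarrow> real" where
  "Cpw a b p w = Inf {C. poincare_const a b p w C}"

definition H1 :: "ereal \<Rightarrow> ereal \<Rightarrow> (real \<Rightarrow> real) \<Rightarrow> (real \<Rightarrow> real) \<Rightarrow> bool" where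
  "H1 a b p w \<longleftrightarrow> (\<exists>C. poincare_const a b p w C)"

definition H2 :: "ereal \<Rightarrow> ereal \<Rightarrow> (real \<Rightarrow> real) \<Rightarrow> (real \<Rightarrow> real) \<Rightarrow> bool" where
  "H2 a b p w \<longleftrightarrow> (\<forall>f. L2pw a b p w f \<longrightarrow> locint a b f)"

definition Pcdf :: "ereal \<Rightarrow> (real \<Rightarrow> real) \<Rightarrow> real \<Rightarrow> real" where
  "Pcdf a p x = interval_lebesgue_integral lborel a (ereal x) p"

definition Kker :: "ereal \<Rightarrow> (real \<Rightarrow> real) \<Rightarrow> real \<Rightarrow> real \<Rightarrow> real" where
  "Kker a p x y = Pcdf a p (min x y) * (1 - Pcdf a p (max x y))"

definition kw :: "ereal \<Rightarrow> (real \<Rightarrow> real) \<Rightarrow> (real \<Rightarrow> real) \<Rightarrow> real \<Rightarrow> real \<Rightarrow> real" where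
  "kw a p w x y = Kker a p x y / (p x * p y) / (w x * w y)"

definition E2 :: "ereal \<Rightarrow> ereal \<Rightarrow> (real \<Rightarrow> real) \<Rightarrow> (real \<Rightarrow> real) \<Rightarrow> (real \<Rightarrow> real) \<Rightarrow> bool" where
  "E2 a b p w f \<longleftrightarrow> L2pw a b p w f \<and> locint a b f \<and>
     (\<exists>x0 \<in> einterval a b. L2p a b p (\<lambda>x. LBINT t=ereal x0..ereal x. f t))"

definition Lt :: "ereal \<Rightarrow> ereal \<Rightarrow> (real \<Rightarrow> real) \<Rightarrow> (real \<Rightarrow> real) \<Rightarrow> (real \<Rightarrow> real) \<Rightarrow> real \<Rightarrow> real" where
  "Lt a b p w f x = (1 / (p x * w x)) * (LINT y:einterval a b|lborel. Kker a p x y * f y)"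

definition Lt_compact :: "ereal \<Rightarrow> ereal \<Rightarrow> (real \<Rightarrow> real) \<Rightarrow> (real \<Rightarrow> real) \<Rightarrow> bool" where
  "Lt_compact a b p w \<longleftrightarrow>
     (\<forall>f. E2 a b p w f \<longrightarrow> E2 a b p w (Lt a b p w f)) \<and>
     (\<forall>F::nat \<Rightarrow> real \<Rightarrow> real. (\<forall>n. E2 a b p w (F n)) \<and> bounded (range (\<lambda>n. normpw a b p w (F n))) \<longrightarrow>
        (\<exists>r g. strict_mono r \<and> E2 a b p w g \<and>
           (\<lambda>n. normpw a b p w (\<lambda>x. Lt a b p w (F (r n)) x - g x)) \<longlonglongrightarrow> 0))"

text \<open>The eigenfunctions are the
  representatives satisfying the eigen-equation pointwise on ]a,b[.\<close>
definition eigensystem :: "ereal \<Rightarrow> ereal \<Rightarrow> (real \<Rightarrow> real) \<Rightarrow> (real \<Rightarrow> real) \<Rightarrow>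
     (nat \<Rightarrow> real) \<Rightarrow> (nat \<Rightarrow> real \<Rightarrow> real) \<Rightarrow> bool" where
  "eigensystem a b p w \<kappa> e \<longleftrightarrow>
     (\<forall>i\<ge>1. E2 a b p w (e i)) \<and>
     (\<forall>i\<ge>1. \<forall>j\<ge>1. ipw a b p w (e i) (e j) = (if i = j then 1 else 0)) \<and>
     (\<forall>g. E2 a b p w g \<longrightarrow>
        (\<lambda>N. normpw a b p w (\<lambda>x. g x - (\<Sum>i=1..N. ipw a b p w g (e i) * e i x))) \<longlonglongrightarrow> 0) \<and>
     (\<forall>i\<ge>1. \<forall>x \<in> einterval a b. Lt a b p w (e i) x = \<kappa> i * e i x) \<and>
     (\<forall>i\<ge>1. \<kappa> i > 0) \<and> (\<forall>i\<ge>1. \<kappa> (Suc i) \<le> \<kappa> i) \<and> \<kappa> \<longlonglongrightarrow> 0 \<and>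
     \<kappa> 1 = Cpw a b p w"

end

theory Submission
  imports Defs
begin

(* By the eigenfunction expansion at x, (L^n g0)(x) = <k_w(x,.), L^(n-1) g0> equals
   sum_i kappa_i^n a_i e_i(x).  The term i = 1 is a_1 e_1(x) C^n with C = kappa_1 = C(p,w), and by
   Cauchy-Schwarz and Bessel's inequality the others add up to at most
   ||k_w(x,.)|| ||g0 - a_1 e_1|| kappa_2^(n-1); the bound on the ratio of two consecutive iterates
   is then elementary algebra.
   Reading off the coefficients of L^n g0 needs L to be symmetric in L^2(pw), i.e. Fubini for
   K(y,z) u(y) u(z).  This integrability is where (H1) and (H2) enter: for v >= 0 in L^2(pw)
   supported in a compact subinterval (hence integrable, by (H2)), the double integral of
   K(y,z) v(y) v(z) is the p-variance of the primitive s |-> -int_s^oo v, so the Poincare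
   inequality bounds it by a Poincare constant times ||v||^2, uniformly in the truncation;
   monotone convergence then removes the truncation. *)

lemma ratio_perturbation_bound:
  fixes \<alpha> C \<kappa> M u v :: real and n :: nat
  assumes C: "C > 0" and n: "n \<ge> 1" and \<kappa>: "0 \<le> \<kappa>" "\<kappa> \<le> C" and M: "M \<ge> 0"
    and v: "\<bar>v - \<alpha> * C ^ n\<bar> \<le> M * \<kappa> ^ (n - 1)"
    and u: "\<bar>u - \<alpha> * C ^ (n + 1)\<bar> \<le> M * \<kappa> ^ n"
    and small: "M * (\<kappa> / C) ^ (n - 1) < C * \<bar>\<alpha>\<bar>"
  shows "\<bar>u / v - C\<bar> \<le> (if M * (\<kappa> / C) ^ (n - 1) = 0 then 0
           else 2 * inverse (\<bar>\<alpha>\<bar> / (M * (\<kappa> / C) ^ (n - 1)) - 1 / C))"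
proof -
  define B where "B = M * (\<kappa> / C) ^ (n - 1)"
  define D where "D = C ^ (n - 1)"
  have D: "D > 0" using C by (simp add: D_def)
  have B: "B \<ge> 0" using M \<kappa> C by (simp add: B_def)
  have Cn: "C ^ n = C * D" using n by (cases n) (simp_all add: D_def)
  have MD: "M * \<kappa> ^ (n - 1) = B * D" using C by (simp add: B_def D_def power_divide)
  have "M * \<kappa> ^ n = M * \<kappa> ^ (n - 1) * \<kappa>" using n by (cases n) (simp_all add: ac_simps)
  also have "\<dots> \<le> M * \<kappa> ^ (n - 1) * C" using M \<kappa> by (intro mult_left_mono) auto
  finally have u': "\<bar>u - \<alpha> * C ^ (n + 1)\<bar> \<le> B * D * C" using u MD by simp
  have v': "\<bar>v - \<alpha> * C ^ n\<bar> \<le> B * D" using v MD by simp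
  have gap: "0 < C * \<bar>\<alpha>\<bar> * D - B * D" using small D by (simp add: B_def)
  have "\<bar>\<alpha> * C ^ n\<bar> = C * \<bar>\<alpha>\<bar> * D" using Cn C D by (simp add: abs_mult)
  then have v_lower: "C * \<bar>\<alpha>\<bar> * D - B * D \<le> \<bar>v\<bar>" using v' by linarith
  then have v0: "v \<noteq> 0" using gap by auto
  have diff: "u / v - C = ((u - \<alpha> * C ^ (n + 1)) - C * (v - \<alpha> * C ^ n)) / v"
    using v0 by (simp add: field_simps)
  have "\<bar>C * (v - \<alpha> * C ^ n)\<bar> \<le> C * (B * D)" using v' C by (simp add: abs_mult)
  then have num: "\<bar>(u - \<alpha> * C ^ (n + 1)) - C * (v - \<alpha> * C ^ n)\<bar> \<le> 2 * B * C * D"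
    using u' by (simp add: abs_triangle_ineq4 algebra_simps)
  have "\<bar>u / v - C\<bar> \<le> (if B = 0 then 0 else 2 * inverse (\<bar>\<alpha>\<bar> / B - 1 / C))"
  proof (cases "B = 0")
    case True
    then have "(u - \<alpha> * C ^ (n + 1)) - C * (v - \<alpha> * C ^ n) = 0" using num by simp
    then show ?thesis using diff True by simp
  next
    case False
    then have "B > 0" using B by simp
    have "\<bar>u / v - C\<bar> \<le> 2 * B * C * D / \<bar>v\<bar>"
      unfolding diff abs_divide using num v0 by (intro divide_right_mono) auto
    also have "\<dots> \<le> 2 * B * C * D / (C * \<bar>\<alpha>\<bar> * D - B * D)"
      using v_lower gap B C D by (intro divide_left_mono mult_pos_pos) auto
    also have "\<dots> = 2 * inverse (\<bar>\<alpha>\<bar> / B - 1 / C)"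
      using \<open>B > 0\<close> C D gap by (simp add: field_simps)
    finally show ?thesis using False by simp
  qed
  then show ?thesis by (simp only: B_def)
qed

lemma nonneg_quadratic_discriminant:
  fixes A B C :: real
  assumes "\<And>t. 0 \<le> A - 2 * t * B + t\<^sup>2 * C" "C \<ge> 0"
  shows "B\<^sup>2 \<le> A * C"
proof (cases "C = 0")
  case True
  have "B = 0"
  proof (rule ccontr)
    assume "B \<noteq> 0"
    have "0 \<le> A - 2 * ((A + 1) / (2 * B)) * B" using assms(1)[of "(A + 1) / (2 * B)"] True by simp
    also have "\<dots> = -1" using \<open>B \<noteq> 0\<close> by (simp add: field_simps)
    finally show False by simp
  qed
  then show ?thesis using True by simp
next
  case False
  then have C: "C > 0" using assms(2) by simp
  have "0 \<le> A - 2 * (B / C) * B + (B / C)\<^sup>2 * C" by (rule assms(1))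
  also have "\<dots> = (A * C - B\<^sup>2) / C" using C by (simp add: field_simps power2_eq_square)
  finally show ?thesis using C by (simp add: zero_le_divide_iff)
qed

lemma decreasing_from_le:
  fixes f :: "nat \<Rightarrow> 'a::preorder"
  assumes "\<And>i. m \<le> i \<Longrightarrow> f (Suc i) \<le> f i" and "m \<le> i"
  shows "f i \<le> f m"
  using assms(2) by (induction i rule: dec_induct) (auto intro: order_trans assms(1))

lemma integrable_product_lborel:
  fixes F G :: "real \<Rightarrow> real"
  assumes F: "integrable lborel F" and G: "integrable lborel G"
  shows "integrable (lborel \<Otimes>\<^sub>M lborel) (\<lambda>(x,y). F x * G y)"
proof (rule lborel_pair.Fubini_integrable)
  have [measurable]: "F \<in> borel_measurable lborel" "G \<in> borel_measurable lborel"
    using F G by auto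
  show "(\<lambda>(x,y). F x * G y) \<in> borel_measurable (lborel \<Otimes>\<^sub>M lborel)" by measurable
  have "integrable lborel (\<lambda>x. \<bar>F x\<bar> * (\<integral>y. \<bar>G y\<bar> \<partial>lborel))"
    using F by (intro integrable_mult_left) auto
  then show "integrable lborel (\<lambda>x. \<integral>y. norm ((\<lambda>(x,y). F x * G y) (x, y)) \<partial>lborel)"
    by (simp add: abs_mult)
  show "AE x in lborel. integrable lborel (\<lambda>y. (\<lambda>(x,y). F x * G y) (x, y))"
    using G by simp
qed

definition tail_integral :: "(real \<Rightarrow> real) \<Rightarrow> real \<Rightarrow> real" where
  "tail_integral v s = (\<integral>y. indicator {s..} y * v y \<partial>lborel)"

lemma tail_integral_measurable[measurable]:
  assumes [measurable]: "v \<in> borel_measurable borel"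
  shows "tail_integral v \<in> borel_measurable borel"
proof -
  have "(\<lambda>(s, y). indicator {s..} y * v y) \<in> borel_measurable (borel \<Otimes>\<^sub>M lborel)"
    unfolding indicator_def atLeast_iff by measurable
  then show ?thesis
    unfolding tail_integral_def by (rule lborel.borel_measurable_lebesgue_integral)
qed

lemma tail_integral_bounds:
  assumes v: "integrable lborel v" and v_nonneg: "\<And>y. 0 \<le> v y"
  shows "0 \<le> tail_integral v s" "tail_integral v s \<le> integral\<^sup>L lborel v"
proof -
  show "0 \<le> tail_integral v s"
    unfolding tail_integral_def by (rule integral_nonneg_AE) (auto simp: v_nonneg)
  have "integrable lborel (\<lambda>y. indicator {s..} y * v y)"
    using integrable_mult_indicator[OF _ v, of "{s..}"] by simp
  then show "tail_integral v s \<le> integral\<^sup>L lborel v"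
    unfolding tail_integral_def
    by (rule integral_mono[OF _ v]) (auto simp: v_nonneg indicator_def)
qed

lemma integral_mult_tail_integral:
  fixes q g v :: "real \<Rightarrow> real"
  assumes q: "integrable lborel q" and v: "integrable lborel v"
    and g[measurable]: "g \<in> borel_measurable borel" and g_bound: "\<And>s. \<bar>g s\<bar> \<le> M"
  shows "(\<integral>s. q s * g s * tail_integral v s \<partial>lborel)
       = (\<integral>y. v y * (\<integral>s. q s * g s * indicator {..y} s \<partial>lborel) \<partial>lborel)"
proof -
  have [measurable]: "q \<in> borel_measurable borel" "v \<in> borel_measurable borel"
    using q v by auto
  have M: "M \<ge> 0" using g_bound[of 0] by linarith
  define F where "F s y = q s * g s * (indicator {s..} y * v y)" for s y
  have F_int: "integrable (lborel \<Otimes>\<^sub>M lborel) (\<lambda>(s,y). F s y)"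
  proof (rule Bochner_Integration.integrable_bound
      [OF integrable_product_lborel[OF integrable_mult_right[OF q, of M] v]])
    show "(\<lambda>(s,y). F s y) \<in> borel_measurable (lborel \<Otimes>\<^sub>M lborel)"
      unfolding F_def indicator_def atLeast_iff by measurable
    have "\<bar>F s y\<bar> \<le> \<bar>M * q s * v y\<bar>" for s y
    proof -
      have "\<bar>q s\<bar> * \<bar>g s\<bar> * (indicator {s..} y * \<bar>v y\<bar>) \<le> \<bar>q s\<bar> * M * \<bar>v y\<bar>"
        using g_bound[of s] by (intro mult_mono) (auto simp: indicator_def)
      then show ?thesis using M by (simp add: F_def abs_mult ac_simps)
    qed
    then show "AE x in lborel \<Otimes>\<^sub>M lborel. norm ((\<lambda>(s,y). F s y) x) \<le> norm ((\<lambda>(s,y). M * q s * v y) x)"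
      by auto
  qed
  have F_swap: "(\<lambda>s. F s y) = (\<lambda>s. v y * (q s * g s * indicator {..y} s))" for y
    by (auto simp: F_def indicator_def)
  have "(\<integral>s. q s * g s * tail_integral v s \<partial>lborel)
      = (\<integral>s. (\<integral>y. F s y \<partial>lborel) \<partial>lborel)"
    by (simp add: F_def tail_integral_def)
  also have "\<dots> = (\<integral>y. (\<integral>s. F s y \<partial>lborel) \<partial>lborel)"
    using lborel_pair.Fubini_integral[OF F_int] by simp
  also have "\<dots> = (\<integral>y. v y * (\<integral>s. q s * g s * indicator {..y} s \<partial>lborel) \<partial>lborel)"
    by (simp add: F_swap)
  finally show ?thesis .
qed

lemma DERIV_zero_outside_support:
  assumes der: "\<And>x. (\<phi> has_real_derivative \<phi>' x) (at x)"
    and zero: "\<And>x. x \<notin> {c..d} \<Longrightarrow> \<phi> x = (0::real)" and s: "s \<notin> {c..d}"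
  shows "\<phi>' s = 0"
proof -
  obtain S where S: "open S" "s \<in> S" "\<And>x. x \<in> S \<Longrightarrow> x \<notin> {c..d}"
  proof (cases "s < c")
    case True then show ?thesis using that[of "{..<c}"] by auto
  next
    case False then have "s > d" using s by auto
    then show ?thesis using that[of "{d<..}"] by auto
  qed
  have "((\<lambda>_. 0) has_field_derivative \<phi>' s) (at s)"
    using has_field_derivative_transform_within_open[OF der S(1,2)] zero S(3) by auto
  then show ?thesis using DERIV_unique DERIV_const by blast
qed

lemma integrable_vanishing_outside_Icc:
  fixes f :: "real \<Rightarrow> real"
  assumes cont: "continuous_on {c..d} f" and zero: "\<And>x. x \<notin> {c..d} \<Longrightarrow> f x = 0"
  shows "integrable lborel f"
proof -
  have "f = (\<lambda>x. indicator {c..d} x *\<^sub>R f x)"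
    using zero by (auto simp: fun_eq_iff indicator_def)
  with borel_integrable_atLeastAtMost'[OF cont] show ?thesis
    unfolding set_integrable_def by simp
qed

lemma integral_deriv_atMost:
  assumes der: "\<And>x. (\<phi> has_real_derivative \<phi>' x) (at x)" and cont: "continuous_on UNIV \<phi>'"
    and zero: "\<And>x. x \<notin> {c..d} \<Longrightarrow> \<phi> x = (0::real)"
  shows "(\<integral>s. \<phi>' s * indicator {..y} s \<partial>lborel) = \<phi> y"
proof -
  define c' where "c' = min c y - 1"
  have "(\<integral>s. \<phi>' s * indicator {..y} s \<partial>lborel) = (\<integral>s. indicator {c'..y} s *\<^sub>R \<phi>' s \<partial>lborel)"
  proof (rule Bochner_Integration.integral_cong[OF refl])
    fix s
    show "\<phi>' s * indicator {..y} s = indicator {c'..y} s *\<^sub>R \<phi>' s"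
    proof (cases "s \<in> {c..d}")
      case True
      then show ?thesis by (auto simp: c'_def indicator_def)
    next
      case False
      then show ?thesis using DERIV_zero_outside_support[OF der zero False] by simp
    qed
  qed
  also have "\<dots> = \<phi> y - \<phi> c'"
  proof (rule integral_FTC_atLeastAtMost)
    show "(\<phi> has_vector_derivative \<phi>' x) (at x within {c'..y})" for x
      using der[of x] by (simp add: has_real_derivative_iff_has_vector_derivative has_vector_derivative_at_within)
  qed (auto simp: c'_def intro: continuous_on_subset[OF cont])
  also have "\<phi> c' = 0" using zero[of c'] by (simp add: c'_def min_def)
  finally show ?thesis by simp
qed

lemma einterval_Icc_exhaustion:
  fixes a b :: ereal
  assumes "a < b"
  obtains l r :: "nat \<Rightarrow> real" where "einterval a b = (\<Union>i. {l i .. r i})"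
    and "\<And>i j. i \<le> j \<Longrightarrow> {l i .. r i} \<subseteq> {l j .. r j}"
    and "\<And>i. l i \<in> einterval a b" and "\<And>i. r i \<in> einterval a b"
proof -
  have "\<exists>r l :: nat \<Rightarrow> real. einterval a b = (\<Union>i. {l i .. r i}) \<and> incseq r \<and> decseq l \<and>
      (\<forall>i. l i < r i) \<and> (\<forall>i. a < l i) \<and> (\<forall>i. r i < b)"
    by (rule einterval_Icc_approximation[OF assms]) blast
  then obtain r l :: "nat \<Rightarrow> real" where I_eq: "einterval a b = (\<Union>i. {l i .. r i})"
    and r: "incseq r" and l: "decseq l" and lr: "\<And>i. l i < r i"
    and al: "\<And>i. a < l i" and rb: "\<And>i. r i < b"
    by blast
  show ?thesis
  proof
    show "{l i .. r i} \<subseteq> {l j .. r j}" if "i \<le> j" for i j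
    proof -
      have "l j \<le> l i" "r i \<le> r j" using monotoneD[OF l that] monotoneD[OF r that] by auto
      then show ?thesis by auto
    qed
    have lr': "ereal (l i) < ereal (r i)" for i using lr[of i] by simp
    show "l i \<in> einterval a b" for i
      using al[of i] less_trans[OF lr' rb] by (simp add: einterval_def)
    show "r i \<in> einterval a b" for i
      using rb[of i] less_trans[OF al lr'] by (simp add: einterval_def)
  qed (rule I_eq)
qed

locale density_weight =
  fixes a b :: ereal and p w :: "real \<Rightarrow> real"
  assumes dens: "is_prob_density a b p"
    and weight: "is_weight a b p w"
begin

abbreviation "I \<equiv> einterval a b"

lemma a_less_b: "a < b"
  using dens unfolding is_prob_density_def by auto

lemma p_measurable[measurable]: "p \<in> borel_measurable borel"
  using dens unfolding is_prob_density_def by auto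

lemma w_measurable[measurable]: "w \<in> borel_measurable borel"
  using weight unfolding is_weight_def by auto

lemma p_integrable: "set_integrable lborel I p"
  using dens unfolding is_prob_density_def by auto

lemma p_integral: "(LINT x:I|lborel. p x) = 1"
  using dens unfolding is_prob_density_def by auto

lemma AE_p_pos: "AE x in lborel. x \<in> I \<longrightarrow> p x > 0"
  using dens unfolding is_prob_density_def by auto

lemma AE_pw_pos: "AE x in lborel. x \<in> I \<longrightarrow> p x * w x > 0"
proof -
  have "AE x in lborel. x \<in> I \<longrightarrow> w x > 0"
    using weight unfolding is_weight_def by auto
  with AE_p_pos show ?thesis by eventually_elim auto
qed

lemma AE_pw_nonneg: "AE x in lborel. x \<in> I \<longrightarrow> p x * w x \<ge> 0"
  using AE_pw_pos by eventually_elim auto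

lemma Icc_subset_I: "c \<in> I \<Longrightarrow> d \<in> I \<Longrightarrow> {c..d} \<subseteq> I"
  by (auto simp: einterval_def) (meson ereal_less_eq(3) le_less_trans less_le_trans)+

section \<open>The Hilbert space $L^2(pw)$\<close>

lemma L2pw_measurable: "L2pw a b p w f \<Longrightarrow> f \<in> borel_measurable borel"
  unfolding L2pw_def by auto

lemma L2pw_integrable:
  "L2pw a b p w f \<Longrightarrow> integrable lborel (\<lambda>y. indicator I y * ((f y)\<^sup>2 * p y * w y))"
  unfolding L2pw_def set_integrable_def by auto

lemma ipw_eq_integral: "ipw a b p w f g = (\<integral>y. indicator I y * (f y * g y * p y * w y) \<partial>lborel)"
  unfolding ipw_def set_lebesgue_integral_def by simp

lemma normpw_eq_sqrt_ipw: "normpw a b p w f = sqrt (ipw a b p w f f)"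
  unfolding normpw_def ipw_def by (simp add: power2_eq_square mult.assoc)

lemma ipw_commute: "ipw a b p w f g = ipw a b p w g f"
  unfolding ipw_def by (simp add: mult.commute mult.left_commute)

lemma ipw_mult_right: "ipw a b p w f (\<lambda>y. c * g y) = c * ipw a b p w f g"
  unfolding ipw_eq_integral by (simp add: algebra_simps)

lemma ipw_self_nonneg: "ipw a b p w f f \<ge> 0"
  unfolding ipw_eq_integral
proof (rule integral_nonneg_AE)
  show "AE y in lborel. 0 \<le> indicator I y * (f y * f y * p y * w y)"
    using AE_pw_nonneg
  proof eventually_elim
    case (elim y)
    then have "y \<in> I \<Longrightarrow> 0 \<le> (f y * f y) * (p y * w y)" by simp
    then show ?case by (simp add: indicator_def mult.assoc)
  qed
qed

lemma normpw_nonneg: "normpw a b p w f \<ge> 0"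
  unfolding normpw_eq_sqrt_ipw using ipw_self_nonneg by simp

lemma normpw_power2: "(normpw a b p w f)\<^sup>2 = ipw a b p w f f"
  unfolding normpw_eq_sqrt_ipw using ipw_self_nonneg by simp

lemma L2pw_integrable_mult:
  assumes f: "L2pw a b p w f" and g: "L2pw a b p w g"
  shows "integrable lborel (\<lambda>y. indicator I y * (f y * g y * p y * w y))"
proof (rule Bochner_Integration.integrable_bound)
  show "integrable lborel
      (\<lambda>y. indicator I y * ((f y)\<^sup>2 * p y * w y) + indicator I y * ((g y)\<^sup>2 * p y * w y))"
    using L2pw_integrable[OF f] L2pw_integrable[OF g] by auto
  show "(\<lambda>y. indicator I y * (f y * g y * p y * w y)) \<in> borel_measurable lborel"
    using L2pw_measurable[OF f] L2pw_measurable[OF g] by measurable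
  show "AE y in lborel. norm (indicator I y * (f y * g y * p y * w y))
     \<le> norm (indicator I y * ((f y)\<^sup>2 * p y * w y) + indicator I y * ((g y)\<^sup>2 * p y * w y))"
    using AE_pw_nonneg
  proof eventually_elim
    case (elim y)
    show ?case
    proof (cases "y \<in> I")
      case True
      then have pw: "p y * w y \<ge> 0" using elim by auto
      have "2 * (\<bar>f y\<bar> * \<bar>g y\<bar>) \<le> (f y)\<^sup>2 + (g y)\<^sup>2"
        using sum_squares_bound[of "\<bar>f y\<bar>" "\<bar>g y\<bar>"] by (simp add: mult.assoc)
      moreover have "0 \<le> \<bar>f y\<bar> * \<bar>g y\<bar>" by simp
      ultimately have "\<bar>f y * g y\<bar> \<le> (f y)\<^sup>2 + (g y)\<^sup>2"
        unfolding abs_mult by linarith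
      then have "\<bar>f y * g y\<bar> * (p y * w y) \<le> ((f y)\<^sup>2 + (g y)\<^sup>2) * (p y * w y)"
        using pw by (rule mult_right_mono)
      moreover have "\<bar>f y * g y * p y * w y\<bar> = \<bar>f y * g y\<bar> * (p y * w y)"
        using pw by (metis abs_mult abs_of_nonneg mult.assoc)
      moreover have "(f y)\<^sup>2 * p y * w y + (g y)\<^sup>2 * p y * w y = ((f y)\<^sup>2 + (g y)\<^sup>2) * (p y * w y)"
        by (simp add: algebra_simps)
      moreover have "0 \<le> ((f y)\<^sup>2 + (g y)\<^sup>2) * (p y * w y)" using pw by simp
      ultimately show ?thesis using True by (simp del: abs_mult)
    qed simp
  qed
qed

lemma ipw_add_right:
  assumes "L2pw a b p w f" "L2pw a b p w g" "L2pw a b p w h"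
  shows "ipw a b p w f (\<lambda>y. g y + h y) = ipw a b p w f g + ipw a b p w f h"
  unfolding ipw_eq_integral
  using Bochner_Integration.integral_add[OF L2pw_integrable_mult[of f g] L2pw_integrable_mult[of f h]] assms
  by (simp add: algebra_simps)

lemma ipw_diff_right:
  assumes "L2pw a b p w f" "L2pw a b p w g" "L2pw a b p w h"
  shows "ipw a b p w f (\<lambda>y. g y - h y) = ipw a b p w f g - ipw a b p w f h"
  unfolding ipw_eq_integral
  using Bochner_Integration.integral_diff[OF L2pw_integrable_mult[of f g] L2pw_integrable_mult[of f h]] assms
  by (simp add: algebra_simps)

lemma L2pw_zero: "L2pw a b p w (\<lambda>y. 0)"
  unfolding L2pw_def set_integrable_def by simp

lemma L2pw_abs: "L2pw a b p w f \<Longrightarrow> L2pw a b p w (\<lambda>y. \<bar>f y\<bar>)"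
  unfolding L2pw_def by (auto intro: borel_measurable_abs)

lemma L2pw_lincomb:
  assumes f: "L2pw a b p w f" and g: "L2pw a b p w g"
  shows "L2pw a b p w (\<lambda>y. c * f y + d * g y)"
proof -
  have "integrable lborel (\<lambda>y. c\<^sup>2 * (indicator I y * ((f y)\<^sup>2 * p y * w y))
     + 2 * c * d * (indicator I y * (f y * g y * p y * w y))
     + d\<^sup>2 * (indicator I y * ((g y)\<^sup>2 * p y * w y)))"
    using L2pw_integrable[OF f] L2pw_integrable[OF g] L2pw_integrable_mult[OF f g] by auto
  then have "integrable lborel (\<lambda>y. indicator I y * ((c * f y + d * g y)\<^sup>2 * p y * w y))"
    by (simp add: power2_eq_square algebra_simps)
  then show ?thesis using L2pw_measurable[OF f] L2pw_measurable[OF g]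
    unfolding L2pw_def set_integrable_def by auto
qed

lemma L2pw_diff: "L2pw a b p w f \<Longrightarrow> L2pw a b p w g \<Longrightarrow> L2pw a b p w (\<lambda>y. f y - g y)"
  using L2pw_lincomb[of f g 1 "-1"] by simp

lemma L2pw_mult: "L2pw a b p w f \<Longrightarrow> L2pw a b p w (\<lambda>y. c * f y)"
  using L2pw_lincomb[of f f c 0] by simp

lemma L2pw_sum:
  assumes "finite A" "\<And>i. i \<in> A \<Longrightarrow> L2pw a b p w (e i)"
  shows "L2pw a b p w (\<lambda>y. \<Sum>i\<in>A. c i * e i y)"
  using assms
proof (induction A rule: finite_induct)
  case empty
  then show ?case using L2pw_zero by simp
next
  case (insert j A)
  then have "L2pw a b p w (\<lambda>y. c j * e j y + 1 * (\<Sum>i\<in>A. c i * e i y))"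
    by (intro L2pw_lincomb) auto
  then show ?case using insert by simp
qed

lemma ipw_sum_right:
  assumes "finite A" "L2pw a b p w f" "\<And>i. i \<in> A \<Longrightarrow> L2pw a b p w (e i)"
  shows "ipw a b p w f (\<lambda>y. \<Sum>i\<in>A. c i * e i y) = (\<Sum>i\<in>A. c i * ipw a b p w f (e i))"
  using assms
proof (induction A rule: finite_induct)
  case empty
  then show ?case unfolding ipw_eq_integral by simp
next
  case (insert j A)
  have "ipw a b p w f (\<lambda>y. \<Sum>i\<in>insert j A. c i * e i y)
      = ipw a b p w f (\<lambda>y. c j * e j y + (\<Sum>i\<in>A. c i * e i y))"
    using insert by simp
  also have "\<dots> = c j * ipw a b p w f (e j) + ipw a b p w f (\<lambda>y. \<Sum>i\<in>A. c i * e i y)"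
    using insert L2pw_mult L2pw_sum[of A e c]
    by (subst ipw_add_right) (auto simp: ipw_mult_right)
  finally show ?case using insert by simp
qed

lemma ipw_Cauchy_Schwarz:
  assumes f: "L2pw a b p w f" and g: "L2pw a b p w g"
  shows "\<bar>ipw a b p w f g\<bar> \<le> normpw a b p w f * normpw a b p w g"
proof -
  have "(ipw a b p w f g)\<^sup>2 \<le> ipw a b p w f f * ipw a b p w g g"
  proof (rule nonneg_quadratic_discriminant)
    fix t
    define h where "h = (\<lambda>y. f y - t * g y)"
    have h: "L2pw a b p w h" and tg: "L2pw a b p w (\<lambda>y. t * g y)"
      unfolding h_def using f g by (auto intro: L2pw_diff L2pw_mult)
    have "0 \<le> ipw a b p w h h" by (rule ipw_self_nonneg)
    also have "ipw a b p w h h = ipw a b p w h f - t * ipw a b p w h g"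
      using ipw_diff_right[OF h f tg] unfolding h_def by (simp add: ipw_mult_right)
    also have "ipw a b p w h f = ipw a b p w f f - t * ipw a b p w f g"
      using ipw_diff_right[OF f f tg] ipw_commute[of h f] unfolding h_def by (simp add: ipw_mult_right)
    also have "ipw a b p w h g = ipw a b p w f g - t * ipw a b p w g g"
      using ipw_diff_right[OF g f tg] ipw_commute[of h g] ipw_commute[of g f]
      unfolding h_def by (simp add: ipw_mult_right)
    finally show "0 \<le> ipw a b p w f f - 2 * t * ipw a b p w f g + t\<^sup>2 * ipw a b p w g g"
      by (simp add: algebra_simps power2_eq_square)
  qed (rule ipw_self_nonneg)
  then have "\<bar>ipw a b p w f g\<bar> \<le> sqrt (ipw a b p w f f * ipw a b p w g g)"
    using real_sqrt_le_mono by fastforce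
  then show ?thesis unfolding normpw_eq_sqrt_ipw by (simp add: real_sqrt_mult)
qed

lemma ipw_orthonormal_sum:
  assumes A: "finite A" and e: "\<And>i. i \<in> A \<Longrightarrow> L2pw a b p w (e i)"
    and orth: "\<And>i j. i \<in> A \<Longrightarrow> j \<in> A \<Longrightarrow> ipw a b p w (e i) (e j) = (if i = j then 1 else 0)"
  shows "ipw a b p w (\<lambda>y. \<Sum>i\<in>A. c i * e i y) (\<lambda>y. \<Sum>i\<in>A. c i * e i y) = (\<Sum>i\<in>A. (c i)\<^sup>2)"
proof -
  define v where "v = (\<lambda>y. \<Sum>i\<in>A. c i * e i y)"
  have v: "L2pw a b p w v" unfolding v_def using L2pw_sum[OF A e] .
  have coeff: "ipw a b p w v (e i) = c i" if i: "i \<in> A" for i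
  proof -
    have "ipw a b p w v (e i) = ipw a b p w (e i) v" by (rule ipw_commute)
    also have "\<dots> = (\<Sum>j\<in>A. c j * ipw a b p w (e i) (e j))"
      unfolding v_def by (rule ipw_sum_right[OF A e[OF i] e])
    also have "\<dots> = (\<Sum>j\<in>A. if i = j then c j else 0)"
      using orth[OF i] by (intro sum.cong) auto
    finally show ?thesis using i A by simp
  qed
  have "ipw a b p w v v = (\<Sum>i\<in>A. c i * ipw a b p w v (e i))"
    using ipw_sum_right[OF A v e] by (simp add: v_def)
  also have "\<dots> = (\<Sum>i\<in>A. (c i)\<^sup>2)" using coeff by (simp add: power2_eq_square)
  finally show ?thesis unfolding v_def .
qed

lemma Bessel_inequality:
  assumes A: "finite A" and e: "\<And>i. i \<in> A \<Longrightarrow> L2pw a b p w (e i)" and h: "L2pw a b p w h"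
    and orth: "\<And>i j. i \<in> A \<Longrightarrow> j \<in> A \<Longrightarrow> ipw a b p w (e i) (e j) = (if i = j then 1 else 0)"
  shows "(\<Sum>i\<in>A. (ipw a b p w h (e i))\<^sup>2) \<le> ipw a b p w h h"
proof -
  define c where "c i = ipw a b p w h (e i)" for i
  define v where "v = (\<lambda>y. \<Sum>i\<in>A. c i * e i y)"
  have v: "L2pw a b p w v" unfolding v_def using L2pw_sum[OF A e] .
  have vv: "ipw a b p w v v = (\<Sum>i\<in>A. (c i)\<^sup>2)"
    unfolding v_def by (rule ipw_orthonormal_sum[OF A e orth])
  have hv: "ipw a b p w h v = (\<Sum>i\<in>A. (c i)\<^sup>2)"
    unfolding v_def using ipw_sum_right[OF A h e] by (simp add: c_def power2_eq_square)
  have hv_h: "ipw a b p w (\<lambda>y. h y - v y) h = ipw a b p w h h - ipw a b p w h v"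
    using ipw_diff_right[OF h h v] ipw_commute[of "\<lambda>y. h y - v y" h] by simp
  have hv_v: "ipw a b p w (\<lambda>y. h y - v y) v = ipw a b p w h v - ipw a b p w v v"
    using ipw_diff_right[OF v h v] ipw_commute[of "\<lambda>y. h y - v y" v] ipw_commute[of v h] by simp
  have "0 \<le> ipw a b p w (\<lambda>y. h y - v y) (\<lambda>y. h y - v y)" by (rule ipw_self_nonneg)
  also have "\<dots> = ipw a b p w (\<lambda>y. h y - v y) h - ipw a b p w (\<lambda>y. h y - v y) v"
    by (rule ipw_diff_right[OF L2pw_diff[OF h v] h v])
  finally show ?thesis using vv hv hv_h hv_v by (simp add: c_def)
qed

section \<open>The distribution function and the kernel\<close>

lemma Pcdf_measurable[measurable]: "Pcdf a p \<in> borel_measurable borel"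
proof -
  have "(\<lambda>t. \<integral>s. indicator (einterval a (ereal t)) s * p s \<partial>lborel) \<in> borel_measurable borel"
    "(\<lambda>t. \<integral>s. indicator (einterval (ereal t) a) s * p s \<partial>lborel) \<in> borel_measurable borel"
    by (auto intro!: lborel.borel_measurable_lebesgue_integral simp: einterval_def indicator_def)
  then have "(\<lambda>t. if a \<le> ereal t then (\<integral>s. indicator (einterval a (ereal t)) s * p s \<partial>lborel)
      else - (\<integral>s. indicator (einterval (ereal t) a) s * p s \<partial>lborel)) \<in> borel_measurable borel"
    by measurable
  moreover have "Pcdf a p = (\<lambda>t. if a \<le> ereal t then (\<integral>s. indicator (einterval a (ereal t)) s * p s \<partial>lborel)
      else - (\<integral>s. indicator (einterval (ereal t) a) s * p s \<partial>lborel))"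
    unfolding Pcdf_def interval_lebesgue_integral_def set_lebesgue_integral_def by (auto simp: fun_eq_iff)
  ultimately show ?thesis by simp
qed

lemma Kker_measurable[measurable]:
  "(\<lambda>(y,z). Kker a p y z) \<in> borel_measurable (borel \<Otimes>\<^sub>M borel)"
  "(\<lambda>(y,z). Kker a p y z) \<in> borel_measurable (lborel \<Otimes>\<^sub>M lborel)"
  unfolding Kker_def by (simp_all add: measurable_lborel2)

lemma einterval_upper_subset: "t \<in> I \<Longrightarrow> einterval a (ereal t) \<subseteq> I"
  by (auto simp: einterval_def) (meson less_ereal.simps(1) less_trans)

lemma Pcdf_eq_integral:
  "t \<in> I \<Longrightarrow> Pcdf a p t = (\<integral>s. indicator (einterval a (ereal t)) s * p s \<partial>lborel)"
  unfolding Pcdf_def interval_lebesgue_integral_def set_lebesgue_integral_def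
  by (auto simp: einterval_def)

lemma Pcdf_nonneg:
  assumes t: "t \<in> I"
  shows "0 \<le> Pcdf a p t"
  unfolding Pcdf_eq_integral[OF t]
proof (rule integral_nonneg_AE)
  show "AE s in lborel. 0 \<le> indicator (einterval a (ereal t)) s * p s"
    using AE_p_pos by eventually_elim (use einterval_upper_subset[OF t] in \<open>auto simp: indicator_def\<close>)
qed

lemma Pcdf_le_1:
  assumes t: "t \<in> I"
  shows "Pcdf a p t \<le> 1"
proof -
  have "integrable lborel (\<lambda>s. indicator (einterval a (ereal t)) s * p s)"
    using set_integrable_subset[OF p_integrable _ einterval_upper_subset[OF t]]
    unfolding set_integrable_def by simp
  moreover have "integrable lborel (\<lambda>s. indicator I s * p s)"
    using p_integrable unfolding set_integrable_def by simp
  moreover have "AE s in lborel. indicator (einterval a (ereal t)) s * p s \<le> indicator I s * p s"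
    using AE_p_pos by eventually_elim (use einterval_upper_subset[OF t] in \<open>auto simp: indicator_def\<close>)
  ultimately have "Pcdf a p t \<le> (\<integral>s. indicator I s * p s \<partial>lborel)"
    unfolding Pcdf_eq_integral[OF t] by (rule integral_mono_AE)
  also have "\<dots> = 1" using p_integral unfolding set_lebesgue_integral_def by simp
  finally show ?thesis .
qed

lemma integral_indicator_atMost_eq_Pcdf:
  assumes t: "t \<in> I"
  shows "(\<integral>s. indicator I s * p s * indicator {..t} s \<partial>lborel) = Pcdf a p t"
  unfolding Pcdf_eq_integral[OF t]
proof (rule integral_cong_AE)
  show "AE s in lborel. indicator I s * p s * indicator {..t} s = indicator (einterval a (ereal t)) s * p s"
    using AE_lborel_singleton[of t]
  proof eventually_elim
    case (elim s)
    have "s \<in> I \<and> s \<le> t \<longleftrightarrow> s \<in> einterval a (ereal t)"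
      using elim t einterval_upper_subset[OF t] by (auto simp: einterval_def)
    then show ?case by (auto simp: indicator_def)
  qed
qed measurable

lemma Kker_commute: "Kker a p y z = Kker a p z y"
  unfolding Kker_def by (simp add: min.commute max.commute)

lemma Kker_eq_Pcdf_diff: "Kker a p y z = Pcdf a p (min y z) - Pcdf a p y * Pcdf a p z"
  unfolding Kker_def by (cases "y \<le> z") (auto simp: min_def max_def algebra_simps)

lemma Kker_nonneg: "y \<in> I \<Longrightarrow> z \<in> I \<Longrightarrow> 0 \<le> Kker a p y z"
  unfolding Kker_def using Pcdf_nonneg Pcdf_le_1 by (simp add: min_def max_def)

lemma Lt_eq_ipw_kw:
  assumes [measurable]: "f \<in> borel_measurable borel"
  shows "Lt a b p w f x = ipw a b p w (kw a p w x) f"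
proof -
  have "ipw a b p w (kw a p w x) f = (\<integral>y. 1 / (p x * w x) * (indicator I y * (Kker a p x y * f y)) \<partial>lborel)"
    unfolding ipw_eq_integral
  proof (rule integral_cong_AE)
    show "AE y in lborel. indicator I y * (kw a p w x y * f y * p y * w y)
        = 1 / (p x * w x) * (indicator I y * (Kker a p x y * f y))"
      using AE_pw_pos by eventually_elim (auto simp: kw_def indicator_def field_simps)
  qed (unfold kw_def, measurable)
  then show ?thesis
    unfolding Lt_def set_lebesgue_integral_def by simp
qed

section \<open>Integrability of the kernel\<close>

abbreviation K_integrand :: "(real \<Rightarrow> real) \<Rightarrow> (real \<Rightarrow> real) \<Rightarrow> real \<times> real \<Rightarrow> real" where
  "K_integrand u v \<equiv> \<lambda>(y,z). indicator I y * indicator I z * Kker a p y z * u y * v z"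

lemma K_integrand_double_integral:
  assumes v: "integrable lborel v" and v_support: "\<And>y. v y \<noteq> 0 \<Longrightarrow> y \<in> I"
  shows "integrable (lborel \<Otimes>\<^sub>M lborel) (K_integrand v v)"
    and "integral\<^sup>L (lborel \<Otimes>\<^sub>M lborel) (K_integrand v v)
       = (\<integral>y. v y * (\<integral>z. v z * Pcdf a p (min y z) \<partial>lborel) \<partial>lborel) - (\<integral>y. v y * Pcdf a p y \<partial>lborel)\<^sup>2"
proof -
  have [measurable]: "v \<in> borel_measurable borel" using v by auto
  define G1 where "G1 = (\<lambda>(y,z). v y * (v z * Pcdf a p (min y z)))"
  define G2 where "G2 = (\<lambda>(y,z). (v y * Pcdf a p y) * (v z * Pcdf a p z))"
  have vv: "integrable (lborel \<Otimes>\<^sub>M lborel) (\<lambda>(y,z). v y * v z)"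
    using integrable_product_lborel[OF v v] .
  have dominated: "\<bar>v y * v z * r\<bar> \<le> \<bar>v y * v z\<bar>"
    if "y \<in> I \<Longrightarrow> z \<in> I \<Longrightarrow> \<bar>r\<bar> \<le> 1" for y z r
  proof (cases "v y = 0 \<or> v z = 0")
    case False
    then have "\<bar>v y * v z\<bar> * \<bar>r\<bar> \<le> \<bar>v y * v z\<bar> * 1"
      using that v_support by (intro mult_left_mono) auto
    then show ?thesis by (simp add: abs_mult)
  qed auto
  have G1_int: "integrable (lborel \<Otimes>\<^sub>M lborel) G1"
  proof (rule Bochner_Integration.integrable_bound[OF vv])
    show "G1 \<in> borel_measurable (lborel \<Otimes>\<^sub>M lborel)" unfolding G1_def by measurable
    have "\<bar>v y * (v z * Pcdf a p (min y z))\<bar> \<le> \<bar>v y * v z\<bar>" for y z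
      using dominated[of y z "Pcdf a p (min y z)"] Pcdf_nonneg Pcdf_le_1
      by (simp add: min_def ac_simps)
    then show "AE x in lborel \<Otimes>\<^sub>M lborel. norm (G1 x) \<le> norm ((\<lambda>(y,z). v y * v z) x)"
      by (auto simp: G1_def)
  qed
  have G2_int: "integrable (lborel \<Otimes>\<^sub>M lborel) G2"
  proof (rule Bochner_Integration.integrable_bound[OF vv])
    show "G2 \<in> borel_measurable (lborel \<Otimes>\<^sub>M lborel)" unfolding G2_def by measurable
    have "\<bar>v y * Pcdf a p y * (v z * Pcdf a p z)\<bar> \<le> \<bar>v y * v z\<bar>" for y z
      using dominated[of y z "Pcdf a p y * Pcdf a p z"] Pcdf_nonneg Pcdf_le_1
      by (simp add: abs_mult mult_le_one ac_simps)
    then show "AE x in lborel \<Otimes>\<^sub>M lborel. norm (G2 x) \<le> norm ((\<lambda>(y,z). v y * v z) x)"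
      by (auto simp: G2_def)
  qed
  have "K_integrand v v (y, z) = G1 (y, z) - G2 (y, z)" for y z
    using v_support[of y] v_support[of z]
    by (cases "v y = 0 \<or> v z = 0") (auto simp: G1_def G2_def Kker_eq_Pcdf_diff algebra_simps)
  then have K_eq: "K_integrand v v = (\<lambda>x. G1 x - G2 x)"
    unfolding fun_eq_iff split_paired_All by blast
  show "integrable (lborel \<Otimes>\<^sub>M lborel) (K_integrand v v)"
    unfolding K_eq using G1_int G2_int by simp
  have "integral\<^sup>L (lborel \<Otimes>\<^sub>M lborel) G1 = (\<integral>y. v y * (\<integral>z. v z * Pcdf a p (min y z) \<partial>lborel) \<partial>lborel)"
    using lborel_pair.integral_fst'[OF G1_int] by (simp add: G1_def)
  moreover have "integral\<^sup>L (lborel \<Otimes>\<^sub>M lborel) G2 = (\<integral>y. v y * Pcdf a p y \<partial>lborel)\<^sup>2"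
    using lborel_pair.integral_fst'[OF G2_int] by (simp add: G2_def power2_eq_square)
  ultimately show "integral\<^sup>L (lborel \<Otimes>\<^sub>M lborel) (K_integrand v v)
       = (\<integral>y. v y * (\<integral>z. v z * Pcdf a p (min y z) \<partial>lborel) \<partial>lborel) - (\<integral>y. v y * Pcdf a p y \<partial>lborel)\<^sup>2"
    unfolding K_eq using Bochner_Integration.integral_diff[OF G1_int G2_int] by simp
qed

lemma var_p_neg_tail_integral:
  assumes v: "integrable lborel v" and v_nonneg: "\<And>y. 0 \<le> v y"
    and v_support: "\<And>y. v y \<noteq> 0 \<Longrightarrow> y \<in> I"
  shows "var_p a b p (\<lambda>s. - tail_integral v s) = integral\<^sup>L (lborel \<Otimes>\<^sub>M lborel) (K_integrand v v)"
proof -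
  have [measurable]: "v \<in> borel_measurable borel" using v by auto
  define q where "q s = indicator I s * p s" for s
  define V where "V = tail_integral v"
  have q: "integrable lborel q" using p_integrable unfolding q_def set_integrable_def by simp
  have V_bound: "\<bar>V s\<bar> \<le> integral\<^sup>L lborel v" for s
    using tail_integral_bounds[OF v v_nonneg] by (simp add: V_def)
  have vq_Pcdf: "v y * (\<integral>s. q s * indicator {..t} s \<partial>lborel) = v y * Pcdf a p t"
    if "v y \<noteq> 0 \<Longrightarrow> t \<in> I" for y t
    using that integral_indicator_atMost_eq_Pcdf by (cases "v y = 0") (auto simp: q_def)
  have mean: "(\<integral>s. q s * V s \<partial>lborel) = (\<integral>y. v y * Pcdf a p y \<partial>lborel)"
    using integral_mult_tail_integral[OF q v, of "\<lambda>_. 1" 1] vq_Pcdf v_support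
    by (simp add: V_def)
  have inner: "(\<integral>s. q s * indicator {..y} s * V s \<partial>lborel) = (\<integral>z. v z * Pcdf a p (min y z) \<partial>lborel)"
    if y: "y \<in> I" for y
  proof -
    have "(\<integral>s. q s * indicator {..y} s * V s \<partial>lborel)
        = (\<integral>z. v z * (\<integral>s. q s * indicator {..y} s * indicator {..z} s \<partial>lborel) \<partial>lborel)"
      using integral_mult_tail_integral[OF q v, of "indicator {..y}" 1] by (simp add: V_def)
    also have "\<dots> = (\<integral>z. v z * Pcdf a p (min y z) \<partial>lborel)"
    proof (rule Bochner_Integration.integral_cong[OF refl])
      fix z
      have "(\<lambda>s. q s * indicator {..y} s * indicator {..z} s) = (\<lambda>s. q s * indicator {..min y z} s)"
        by (auto simp: indicator_def)
      moreover have "v z \<noteq> 0 \<Longrightarrow> min y z \<in> I" using y v_support by (simp add: min_def)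
      ultimately show "v z * (\<integral>s. q s * indicator {..y} s * indicator {..z} s \<partial>lborel) = v z * Pcdf a p (min y z)"
        using vq_Pcdf[of z "min y z"] by simp
    qed
    finally show ?thesis .
  qed
  have second_moment: "(\<integral>s. q s * (V s * V s) \<partial>lborel) = (\<integral>y. v y * (\<integral>z. v z * Pcdf a p (min y z) \<partial>lborel) \<partial>lborel)"
  proof -
    have "(\<integral>s. q s * (V s * V s) \<partial>lborel) = (\<integral>y. v y * (\<integral>s. q s * V s * indicator {..y} s \<partial>lborel) \<partial>lborel)"
      using integral_mult_tail_integral[OF q v _ V_bound] by (simp add: V_def mult.assoc)
    also have "\<dots> = (\<integral>y. v y * (\<integral>z. v z * Pcdf a p (min y z) \<partial>lborel) \<partial>lborel)"
    proof (rule Bochner_Integration.integral_cong[OF refl])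
      fix y
      show "v y * (\<integral>s. q s * V s * indicator {..y} s \<partial>lborel) = v y * (\<integral>z. v z * Pcdf a p (min y z) \<partial>lborel)"
        using inner[of y] v_support[of y] by (cases "v y = 0") (auto simp: ac_simps)
    qed
    finally show ?thesis .
  qed
  have "var_p a b p (\<lambda>s. - V s) = (\<integral>s. q s * (V s * V s) \<partial>lborel) - (\<integral>s. q s * V s \<partial>lborel)\<^sup>2"
    unfolding var_p_def set_lebesgue_integral_def q_def by (simp add: power2_eq_square ac_simps)
  then show ?thesis
    using K_integrand_double_integral(2)[OF v v_support] mean second_moment by (simp add: V_def)
qed

lemma L2p_neg_tail_integral:
  assumes v: "integrable lborel v" and v_nonneg: "\<And>y. 0 \<le> v y"
  shows "L2p a b p (\<lambda>s. - tail_integral v s)"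
  unfolding L2p_def
proof
  have [measurable]: "v \<in> borel_measurable borel" using v by auto
  show "(\<lambda>s. - tail_integral v s) \<in> borel_measurable borel" by measurable
  define T where "T = integral\<^sup>L lborel v"
  show "set_integrable lborel I (\<lambda>s. (- tail_integral v s)\<^sup>2 * p s)"
  proof (rule set_integrable_bound[OF set_integrable_mult_right[OF p_integrable, of "T\<^sup>2"]])
    show "set_borel_measurable lborel I (\<lambda>s. (- tail_integral v s)\<^sup>2 * p s)"
      unfolding set_borel_measurable_def by measurable
    have "(tail_integral v s)\<^sup>2 * \<bar>p s\<bar> \<le> T\<^sup>2 * \<bar>p s\<bar>" for s
      using tail_integral_bounds[OF v v_nonneg, of s] unfolding T_def
      by (intro mult_right_mono power_mono) auto
    then show "AE s in lborel. s \<in> I \<longrightarrow> norm ((- tail_integral v s)\<^sup>2 * p s) \<le> norm (T\<^sup>2 * p s)"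
      by (simp add: abs_mult)
  qed
qed

lemma weak_deriv_neg_tail_integral:
  assumes v: "integrable lborel v" and v_nonneg: "\<And>y. 0 \<le> v y"
  shows "weak_deriv a b (\<lambda>s. - tail_integral v s) v"
  unfolding weak_deriv_def
proof (intro conjI allI impI)
  have [measurable]: "v \<in> borel_measurable borel" using v by auto
  define T where "T = integral\<^sup>L lborel v"
  have V_bound: "\<bar>tail_integral v s\<bar> \<le> T" for s
    using tail_integral_bounds[OF v v_nonneg, of s] unfolding T_def by simp
  show "locint a b (\<lambda>s. - tail_integral v s)"
    unfolding locint_def
  proof (intro allI impI)
    fix c d :: real
    show "set_integrable lborel {c..d} (\<lambda>s. - tail_integral v s)"
      by (rule set_integrable_bound[OF borel_integrable_atLeastAtMost'[of c d "\<lambda>_. T"]])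
         (auto simp: set_borel_measurable_def intro: order_trans[OF V_bound abs_ge_self])
  qed
  show "locint a b v"
    unfolding locint_def set_integrable_def using integrable_mult_indicator[OF _ v] by auto
  fix \<phi> \<phi>' :: "real \<Rightarrow> real"
  assume "(\<forall>x. (\<phi> has_real_derivative \<phi>' x) (at x)) \<and> continuous_on UNIV \<phi>' \<and>
      (\<exists>c d. c \<in> I \<and> d \<in> I \<and> (\<forall>x. x \<notin> {c..d} \<longrightarrow> \<phi> x = 0))"
  then obtain c d where der: "\<And>x. (\<phi> has_real_derivative \<phi>' x) (at x)"
    and cont: "continuous_on UNIV \<phi>'" and cd: "{c..d} \<subseteq> I"
    and zero: "\<And>x. x \<notin> {c..d} \<Longrightarrow> \<phi> x = 0"
    using Icc_subset_I by blast
  have zero': "\<And>x. x \<notin> {c..d} \<Longrightarrow> \<phi>' x = 0"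
    using DERIV_zero_outside_support[OF der zero] by blast
  have [measurable]: "\<phi>' \<in> borel_measurable borel"
    using cont by (rule borel_measurable_continuous_onI)
  have \<phi>': "integrable lborel \<phi>'"
    by (rule integrable_vanishing_outside_Icc[OF continuous_on_subset[OF cont] zero']) auto
  have outside_I: "\<phi> s = 0" "\<phi>' s = 0" if "s \<notin> I" for s
    using that cd zero zero' by blast+
  have "(LINT s:I|lborel. - tail_integral v s * \<phi>' s) = (\<integral>s. - (\<phi>' s * 1 * tail_integral v s) \<partial>lborel)"
    unfolding set_lebesgue_integral_def
    by (intro Bochner_Integration.integral_cong) (auto simp: indicator_def outside_I)
  also have "\<dots> = - (\<integral>s. \<phi>' s * 1 * tail_integral v s \<partial>lborel)"
    by simp
  also have "\<dots> = - (\<integral>y. v y * \<phi> y \<partial>lborel)"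
    using integral_mult_tail_integral[OF \<phi>' v, of "\<lambda>_. 1" 1] integral_deriv_atMost[OF der cont zero] by simp
  also have "(\<integral>y. v y * \<phi> y \<partial>lborel) = (LINT y:I|lborel. v y * \<phi> y)"
    unfolding set_lebesgue_integral_def
    by (intro Bochner_Integration.integral_cong) (auto simp: indicator_def outside_I)
  finally show "(LINT s:I|lborel. - tail_integral v s * \<phi>' s) = - (LINT y:I|lborel. v y * \<phi> y)" .
qed

lemma K_integrand_truncation_le:
  assumes poincare: "poincare_const a b p w C" and h2: "H2 a b p w"
    and u: "L2pw a b p w u" and u_nonneg: "\<And>y. 0 \<le> u y" and c: "c \<in> I" and d: "d \<in> I"
  defines "v \<equiv> \<lambda>y. indicator {c..d} y * u y"
  shows "integral\<^sup>L (lborel \<Otimes>\<^sub>M lborel) (K_integrand v v) \<le> max C 0 * ipw a b p w u u"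
proof -
  have [measurable]: "u \<in> borel_measurable borel" using L2pw_measurable[OF u] .
  have v_int: "integrable lborel v"
    using h2 u c d unfolding H2_def locint_def set_integrable_def v_def by auto
  have v_nonneg: "\<And>y. 0 \<le> v y" unfolding v_def using u_nonneg by simp
  have v_support: "\<And>y. v y \<noteq> 0 \<Longrightarrow> y \<in> I" using Icc_subset_I[OF c d] by (auto simp: v_def indicator_def)
  have v_sq: "(\<lambda>y. indicator I y * ((v y)\<^sup>2 * p y * w y))
      = (\<lambda>y. indicator {c..d} y *\<^sub>R (indicator I y * ((u y)\<^sup>2 * p y * w y)))"
    by (auto simp: fun_eq_iff v_def indicator_def)
  have "integrable lborel (\<lambda>y. indicator I y * ((v y)\<^sup>2 * p y * w y))"
    unfolding v_sq by (rule integrable_mult_indicator[OF _ L2pw_integrable[OF u]]) simp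
  then have v: "L2pw a b p w v"
    unfolding L2pw_def set_integrable_def v_def by simp
  have v_le_u: "ipw a b p w v v \<le> ipw a b p w u u"
    unfolding ipw_eq_integral
  proof (rule integral_mono_AE[OF L2pw_integrable_mult[OF v v] L2pw_integrable_mult[OF u u]])
    show "AE y in lborel. indicator I y * (v y * v y * p y * w y) \<le> indicator I y * (u y * u y * p y * w y)"
      using AE_pw_nonneg
    proof eventually_elim
      case (elim y)
      have "v y * v y * (p y * w y) \<le> u y * u y * (p y * w y)" if "y \<in> I"
        using elim that by (intro mult_right_mono) (auto simp: v_def indicator_def)
      then show ?case by (simp add: indicator_def mult.assoc)
    qed
  qed
  have "var_p a b p (\<lambda>s. - tail_integral v s) \<le> C * ipw a b p w v v"
    using poincare weak_deriv_neg_tail_integral[OF v_int v_nonneg] L2p_neg_tail_integral[OF v_int v_nonneg] v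
    unfolding poincare_const_def ipw_def by (simp add: power2_eq_square mult.assoc)
  also have "\<dots> \<le> max C 0 * ipw a b p w v v"
    using ipw_self_nonneg[of v] by (intro mult_right_mono) auto
  also have "\<dots> \<le> max C 0 * ipw a b p w u u"
    using v_le_u by (intro mult_left_mono) auto
  finally show ?thesis
    using var_p_neg_tail_integral[OF v_int v_nonneg v_support] by simp
qed

lemma K_integrand_integrable_nonneg:
  assumes h1: "H1 a b p w" and h2: "H2 a b p w"
    and u: "L2pw a b p w u" and u_nonneg: "\<And>y. 0 \<le> u y"
  shows "integrable (lborel \<Otimes>\<^sub>M lborel) (K_integrand u u)"
proof -
  obtain C where poincare: "poincare_const a b p w C" using h1 unfolding H1_def by auto
  have [measurable]: "u \<in> borel_measurable borel" using L2pw_measurable[OF u] .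
  obtain l r :: "nat \<Rightarrow> real" where I_eq: "I = (\<Union>i. {l i .. r i})"
    and Icc_mono: "\<And>i j. i \<le> j \<Longrightarrow> {l i .. r i} \<subseteq> {l j .. r j}"
    and lI: "\<And>i. l i \<in> I" and rI: "\<And>i. r i \<in> I"
    using einterval_Icc_exhaustion[OF a_less_b] by blast
  define J where "J i = {l i .. r i}" for i
  have J_mono: "J i \<subseteq> J j" if "i \<le> j" for i j
    using Icc_mono[OF that] by (simp add: J_def)
  define f where "f i = K_integrand (\<lambda>y. indicator (J i) y * u y) (\<lambda>y. indicator (J i) y * u y)" for i
  have f_int: "integrable (lborel \<Otimes>\<^sub>M lborel) (f i)" for i
  proof -
    have "set_integrable lborel (J i) u"
      using h2 u lI rI unfolding H2_def locint_def J_def by blast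
    moreover have "indicator (J i) y * u y \<noteq> 0 \<Longrightarrow> y \<in> I" for y
      using Icc_subset_I[OF lI[of i] rI[of i]] by (auto simp: J_def indicator_def)
    ultimately show ?thesis
      unfolding f_def set_integrable_def by (intro K_integrand_double_integral(1)) auto
  qed
  have f_bounded: "integral\<^sup>L (lborel \<Otimes>\<^sub>M lborel) (f i) \<le> max C 0 * ipw a b p w u u" for i
    using K_integrand_truncation_le[OF poincare h2 u u_nonneg lI rI] unfolding f_def J_def .
  have f_mono: "f i yz \<le> f j yz" if "i \<le> j" for i j yz
  proof (cases yz)
    case (Pair y z)
    have J: "indicator (J i) t * u t \<le> indicator (J j) t * u t" for t
      using J_mono[OF that] u_nonneg[of t] by (auto simp: indicator_def)
    have "(indicator (J i) y * u y) * (indicator (J i) z * u z) \<le> (indicator (J j) y * u y) * (indicator (J j) z * u z)"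
      using u_nonneg by (intro mult_mono J) auto
    then have "y \<in> I \<Longrightarrow> z \<in> I \<Longrightarrow> Kker a p y z * ((indicator (J i) y * u y) * (indicator (J i) z * u z))
        \<le> Kker a p y z * ((indicator (J j) y * u y) * (indicator (J j) z * u z))"
      using Kker_nonneg by (intro mult_left_mono)
    then show ?thesis by (simp add: f_def Pair mult.assoc indicator_def)
  qed
  have f_lim: "(\<lambda>i. f i yz) \<longlonglongrightarrow> K_integrand u u yz" for yz
  proof (cases yz)
    case (Pair y z)
    show ?thesis
    proof (cases "y \<in> I \<and> z \<in> I")
      case True
      then obtain i j where "y \<in> J i" "z \<in> J j" using I_eq unfolding J_def by auto
      then have "f k yz = K_integrand u u yz" if "max i j \<le> k" for k
        using J_mono[of i k] J_mono[of j k] that by (auto simp: f_def Pair indicator_def)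
      then have "\<forall>\<^sub>F k in sequentially. f k yz = K_integrand u u yz"
        by (rule eventually_sequentiallyI)
      then show ?thesis by (rule tendsto_eventually)
    qed (auto simp: f_def Pair indicator_def)
  qed
  have "incseq (\<lambda>i. integral\<^sup>L (lborel \<Otimes>\<^sub>M lborel) (f i))"
    using f_int f_mono by (intro monoI integral_mono) auto
  then have integrals_converge:
    "(\<lambda>i. integral\<^sup>L (lborel \<Otimes>\<^sub>M lborel) (f i)) \<longlonglongrightarrow> (SUP i. integral\<^sup>L (lborel \<Otimes>\<^sub>M lborel) (f i))"
    using f_bounded by (intro LIMSEQ_incseq_SUP) (auto intro!: bdd_aboveI2)
  show ?thesis
  proof (rule integrable_monotone_convergence[OF f_int _ _ integrals_converge])
    show "AE x in lborel \<Otimes>\<^sub>M lborel. mono (\<lambda>n. f n x)" using f_mono by (auto simp: mono_def)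
    show "AE x in lborel \<Otimes>\<^sub>M lborel. (\<lambda>i. f i x) \<longlonglongrightarrow> K_integrand u u x" using f_lim by auto
  qed measurable
qed

lemma K_integrand_integrable:
  assumes h1: "H1 a b p w" and h2: "H2 a b p w" and f: "L2pw a b p w f" and g: "L2pw a b p w g"
  shows "integrable (lborel \<Otimes>\<^sub>M lborel) (K_integrand f g)"
proof (rule Bochner_Integration.integrable_bound)
  define u where "u y = \<bar>f y\<bar> + \<bar>g y\<bar>" for y
  have u: "L2pw a b p w u"
    unfolding u_def using L2pw_lincomb[OF L2pw_abs[OF f] L2pw_abs[OF g], of 1 1] by (simp add: u_def)
  show "integrable (lborel \<Otimes>\<^sub>M lborel) (K_integrand u u)"
    by (rule K_integrand_integrable_nonneg[OF h1 h2 u]) (simp add: u_def)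
  have [measurable]: "f \<in> borel_measurable borel" "g \<in> borel_measurable borel"
    using f g by (auto dest: L2pw_measurable)
  show "K_integrand f g \<in> borel_measurable (lborel \<Otimes>\<^sub>M lborel)" by measurable
  have "\<bar>K_integrand f g (y, z)\<bar> \<le> \<bar>K_integrand u u (y, z)\<bar>" for y z
  proof (cases "y \<in> I \<and> z \<in> I")
    case True
    have "\<bar>f y\<bar> * \<bar>g z\<bar> \<le> u y * u z" by (intro mult_mono) (auto simp: u_def)
    then have "Kker a p y z * (\<bar>f y\<bar> * \<bar>g z\<bar>) \<le> Kker a p y z * (u y * u z)"
      using Kker_nonneg True by (intro mult_left_mono) auto
    then show ?thesis using Kker_nonneg True by (simp add: abs_mult u_def mult.assoc)
  qed (auto simp: indicator_def)
  then show "AE x in lborel \<Otimes>\<^sub>M lborel. norm (K_integrand f g x) \<le> norm (K_integrand u u x)"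
    by (auto simp: split_paired_all)
qed

section \<open>Symmetry of the operator and the eigenfunction expansion\<close>

lemma AE_integral_K_integrand_eq_Lt:
  "AE y in lborel. (\<integral>z. K_integrand g f (y, z) \<partial>lborel) = indicator I y * (Lt a b p w f y * g y * p y * w y)"
  using AE_pw_pos
proof eventually_elim
  case (elim y)
  have "(\<lambda>z. K_integrand g f (y, z)) = (\<lambda>z. indicator I y * g y * (indicator I z * (Kker a p y z * f z)))"
    by (simp add: fun_eq_iff ac_simps)
  then have "(\<integral>z. K_integrand g f (y, z) \<partial>lborel) = indicator I y * g y * (\<integral>z. indicator I z * (Kker a p y z * f z) \<partial>lborel)"
    by (simp only: integral_mult_right_zero)
  also have "\<dots> = indicator I y * (Lt a b p w f y * g y * p y * w y)"
  proof (cases "y \<in> I")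
    case True
    then have "p y * w y \<noteq> 0" using elim by auto
    then show ?thesis unfolding Lt_def set_lebesgue_integral_def by (simp add: ac_simps)
  qed simp
  finally show ?case .
qed

lemma ipw_Lt_eigenfunction:
  assumes h1: "H1 a b p w" and h2: "H2 a b p w"
    and f: "L2pw a b p w f" and e: "L2pw a b p w e"
    and Lt_f[measurable]: "Lt a b p w f \<in> borel_measurable borel"
    and eigen: "\<And>z. z \<in> I \<Longrightarrow> Lt a b p w e z = \<kappa> * e z"
  shows "ipw a b p w (Lt a b p w f) e = \<kappa> * ipw a b p w f e"
proof -
  have [measurable]: "f \<in> borel_measurable borel" "e \<in> borel_measurable borel"
    using f e by (auto dest: L2pw_measurable)
  have Lt_side: "(\<integral>y. (\<integral>z. K_integrand e f (y, z) \<partial>lborel) \<partial>lborel) = ipw a b p w (Lt a b p w f) e"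
    unfolding ipw_eq_integral
    by (rule integral_cong_AE[OF _ _ AE_integral_K_integrand_eq_Lt]) measurable
  have "(\<integral>y. (\<integral>z. K_integrand e f (y, z) \<partial>lborel) \<partial>lborel) = (\<integral>z. (\<integral>y. K_integrand e f (y, z) \<partial>lborel) \<partial>lborel)"
    using lborel_pair.Fubini_integral[OF K_integrand_integrable[OF h1 h2 e f]] by simp
  also have "\<dots> = (\<integral>z. (\<integral>y. K_integrand f e (z, y) \<partial>lborel) \<partial>lborel)"
    by (simp add: Kker_commute ac_simps)
  also have "\<dots> = (\<integral>z. \<kappa> * (indicator I z * (f z * e z * p z * w z)) \<partial>lborel)"
  proof (rule integral_cong_AE)
    show "AE z in lborel. (\<integral>y. K_integrand f e (z, y) \<partial>lborel) = \<kappa> * (indicator I z * (f z * e z * p z * w z))"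
      using AE_integral_K_integrand_eq_Lt[of f e] by eventually_elim (auto simp: eigen ac_simps indicator_def)
  qed measurable
  also have "\<dots> = \<kappa> * ipw a b p w f e"
    unfolding ipw_eq_integral by simp
  finally show ?thesis using Lt_side by simp
qed

end

locale compact_eigensystem = density_weight +
  fixes \<kappa> :: "nat \<Rightarrow> real" and e :: "nat \<Rightarrow> real \<Rightarrow> real"
  assumes h1: "H1 a b p w" and h2: "H2 a b p w"
    and compact: "Lt_compact a b p w" and eig: "eigensystem a b p w \<kappa> e"
begin

lemma e_E2: "i \<ge> 1 \<Longrightarrow> E2 a b p w (e i)"
  and e_orthonormal: "i \<ge> 1 \<Longrightarrow> j \<ge> 1 \<Longrightarrow> ipw a b p w (e i) (e j) = (if i = j then 1 else 0)"
  and e_complete: "E2 a b p w g \<Longrightarrow>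
    (\<lambda>N. normpw a b p w (\<lambda>x. g x - (\<Sum>i=1..N. ipw a b p w g (e i) * e i x))) \<longlonglongrightarrow> 0"
  and Lt_e: "i \<ge> 1 \<Longrightarrow> z \<in> I \<Longrightarrow> Lt a b p w (e i) z = \<kappa> i * e i z"
  and kappa_pos: "i \<ge> 1 \<Longrightarrow> \<kappa> i > 0"
  and kappa_decreasing: "i \<ge> 1 \<Longrightarrow> \<kappa> (Suc i) \<le> \<kappa> i"
  and kappa_1: "\<kappa> 1 = Cpw a b p w"
  using eig unfolding eigensystem_def by auto

lemma e_L2pw: "i \<ge> 1 \<Longrightarrow> L2pw a b p w (e i)"
  using e_E2 unfolding E2_def by auto

lemma kappa_le_kappa_2: "i \<ge> 2 \<Longrightarrow> \<kappa> i \<le> \<kappa> 2"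
  using decreasing_from_le[of 2 \<kappa> i] kappa_decreasing by simp

lemma kappa_2_le_Cpw: "\<kappa> 2 \<le> Cpw a b p w"
  using kappa_decreasing[of 1] kappa_1 by (simp add: numeral_2_eq_2)

lemma E2_Lt: "E2 a b p w f \<Longrightarrow> E2 a b p w (Lt a b p w f)"
  using compact unfolding Lt_compact_def by auto

lemma E2_Lt_iterate: "E2 a b p w g \<Longrightarrow> E2 a b p w ((Lt a b p w ^^ m) g)"
  by (induction m) (auto intro: E2_Lt)

lemma ipw_Lt_iterate_e:
  assumes g: "E2 a b p w g" and i: "i \<ge> 1"
  shows "ipw a b p w ((Lt a b p w ^^ m) g) (e i) = \<kappa> i ^ m * ipw a b p w g (e i)"
proof (induction m)
  case (Suc m)
  define f where "f = (Lt a b p w ^^ m) g"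
  have "E2 a b p w f" "E2 a b p w (Lt a b p w f)"
    using E2_Lt_iterate[OF g] E2_Lt unfolding f_def by auto
  then have "ipw a b p w (Lt a b p w f) (e i) = \<kappa> i * ipw a b p w f (e i)"
    using e_L2pw[OF i] Lt_e[OF i] unfolding E2_def
    by (intro ipw_Lt_eigenfunction[OF h1 h2]) (auto dest: L2pw_measurable)
  then show ?case using Suc.IH by (simp add: f_def)
qed simp

lemma ipw_kw_e:
  assumes x: "x \<in> I" and i: "i \<ge> 1"
  shows "ipw a b p w (kw a p w x) (e i) = \<kappa> i * e i x"
  using Lt_eq_ipw_kw[OF L2pw_measurable[OF e_L2pw[OF i]]] Lt_e[OF i x] by simp

lemma Lt_eigen_expansion:
  assumes x: "x \<in> I" and kx: "L2pw a b p w (kw a p w x)" and f: "E2 a b p w f"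
  shows "(\<lambda>N. \<Sum>i=1..N. ipw a b p w f (e i) * (\<kappa> i * e i x)) \<longlonglongrightarrow> Lt a b p w f x"
proof -
  have f2: "L2pw a b p w f" using f unfolding E2_def by auto
  define S where "S N = (\<lambda>y. \<Sum>i=1..N. ipw a b p w f (e i) * e i y)" for N
  have S: "L2pw a b p w (S N)" for N unfolding S_def by (rule L2pw_sum) (auto intro: e_L2pw)
  have remainder: "Lt a b p w f x - (\<Sum>i=1..N. ipw a b p w f (e i) * (\<kappa> i * e i x))
      = ipw a b p w (kw a p w x) (\<lambda>y. f y - S N y)" for N
  proof -
    have "ipw a b p w (kw a p w x) (S N) = (\<Sum>i=1..N. ipw a b p w f (e i) * ipw a b p w (kw a p w x) (e i))"
      unfolding S_def by (rule ipw_sum_right) (auto intro: e_L2pw kx)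
    then show ?thesis
      using ipw_diff_right[OF kx f2 S] Lt_eq_ipw_kw[OF L2pw_measurable[OF f2]] ipw_kw_e[OF x] by simp
  qed
  have "\<forall>\<^sub>F N in sequentially. norm (ipw a b p w (kw a p w x) (\<lambda>y. f y - S N y))
      \<le> normpw a b p w (kw a p w x) * normpw a b p w (\<lambda>y. f y - S N y)"
    using ipw_Cauchy_Schwarz[OF kx L2pw_diff[OF f2 S]] by simp
  moreover have "(\<lambda>N. normpw a b p w (kw a p w x) * normpw a b p w (\<lambda>y. f y - S N y)) \<longlonglongrightarrow> 0"
    using e_complete[OF f] unfolding S_def by (simp add: tendsto_mult_right_zero)
  ultimately have "(\<lambda>N. Lt a b p w f x - (\<Sum>i=1..N. ipw a b p w f (e i) * (\<kappa> i * e i x))) \<longlonglongrightarrow> 0"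
    unfolding remainder by (rule Lim_null_comparison)
  then have "(\<lambda>N. Lt a b p w f x - (Lt a b p w f x - (\<Sum>i=1..N. ipw a b p w f (e i) * (\<kappa> i * e i x))))
      \<longlonglongrightarrow> Lt a b p w f x - 0"
    by (intro tendsto_intros)
  then show ?thesis by simp
qed

lemma eigen_tail_bound:
  assumes x: "x \<in> I" and kx: "L2pw a b p w (kw a p w x)" and g: "L2pw a b p w g"
  shows "\<bar>\<Sum>i\<in>{2..N}. (\<kappa> i ^ m * ipw a b p w g (e i)) * (\<kappa> i * e i x)\<bar>
    \<le> normpw a b p w (kw a p w x) * (\<kappa> 2 ^ m * normpw a b p w (\<lambda>y. g y - ipw a b p w g (e 1) * e 1 y))"
proof -
  define h where "h = (\<lambda>y. g y - ipw a b p w g (e 1) * e 1 y)"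
  have h: "L2pw a b p w h" unfolding h_def by (intro L2pw_diff L2pw_mult g e_L2pw) simp
  have h_coeff: "ipw a b p w h (e i) = ipw a b p w g (e i)" if i: "i \<ge> 2" for i
  proof -
    have "ipw a b p w h (e i) = ipw a b p w (e i) h" by (rule ipw_commute)
    also have "\<dots> = ipw a b p w (e i) g - ipw a b p w (e i) (\<lambda>y. ipw a b p w g (e 1) * e 1 y)"
      unfolding h_def using i by (intro ipw_diff_right e_L2pw g L2pw_mult) auto
    also have "ipw a b p w (e i) (\<lambda>y. ipw a b p w g (e 1) * e 1 y) = 0"
      using e_orthonormal[of i 1] i by (simp add: ipw_mult_right)
    finally show ?thesis by (simp add: ipw_commute[of "e i" g])
  qed
  define v where "v = (\<lambda>y. \<Sum>i\<in>{2..N}. (\<kappa> i ^ m * ipw a b p w g (e i)) * e i y)"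
  have v: "L2pw a b p w v" unfolding v_def by (rule L2pw_sum) (auto intro: e_L2pw)
  have "ipw a b p w (kw a p w x) v = (\<Sum>i\<in>{2..N}. (\<kappa> i ^ m * ipw a b p w g (e i)) * ipw a b p w (kw a p w x) (e i))"
    unfolding v_def by (rule ipw_sum_right) (auto intro: e_L2pw kx)
  also have "\<dots> = (\<Sum>i\<in>{2..N}. (\<kappa> i ^ m * ipw a b p w g (e i)) * (\<kappa> i * e i x))"
    by (intro sum.cong) (auto simp: ipw_kw_e[OF x])
  finally have kx_v: "ipw a b p w (kw a p w x) v = (\<Sum>i\<in>{2..N}. (\<kappa> i ^ m * ipw a b p w g (e i)) * (\<kappa> i * e i x))" .
  have "ipw a b p w v v = (\<Sum>i\<in>{2..N}. (\<kappa> i ^ m * ipw a b p w g (e i))\<^sup>2)"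
    unfolding v_def by (rule ipw_orthonormal_sum) (auto intro: e_L2pw simp: e_orthonormal)
  also have "\<dots> \<le> (\<Sum>i\<in>{2..N}. (\<kappa> 2 ^ m)\<^sup>2 * (ipw a b p w h (e i))\<^sup>2)"
  proof (rule sum_mono)
    fix i assume i: "i \<in> {2..N}"
    have "\<kappa> i ^ m \<le> \<kappa> 2 ^ m" using i kappa_pos[of i] kappa_le_kappa_2[of i] by (intro power_mono) auto
    then have "(\<kappa> i ^ m)\<^sup>2 \<le> (\<kappa> 2 ^ m)\<^sup>2" by (rule power_mono) (use kappa_pos[of i] i in auto)
    then show "(\<kappa> i ^ m * ipw a b p w g (e i))\<^sup>2 \<le> (\<kappa> 2 ^ m)\<^sup>2 * (ipw a b p w h (e i))\<^sup>2"
      using h_coeff[of i] i by (simp add: power_mult_distrib mult_right_mono)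
  qed
  also have "\<dots> = (\<kappa> 2 ^ m)\<^sup>2 * (\<Sum>i\<in>{2..N}. (ipw a b p w h (e i))\<^sup>2)"
    by (simp add: sum_distrib_left)
  also have "\<dots> \<le> (\<kappa> 2 ^ m)\<^sup>2 * ipw a b p w h h"
    by (intro mult_left_mono Bessel_inequality) (auto intro: e_L2pw h simp: e_orthonormal)
  finally have "(normpw a b p w v)\<^sup>2 \<le> (\<kappa> 2 ^ m * normpw a b p w h)\<^sup>2"
    by (simp only: power_mult_distrib normpw_power2)
  moreover have "0 \<le> \<kappa> 2 ^ m * normpw a b p w h"
    using kappa_pos[of 2] normpw_nonneg[of h] by simp
  ultimately have "normpw a b p w v \<le> \<kappa> 2 ^ m * normpw a b p w h"
    by (rule power2_le_imp_le)
  then have "normpw a b p w (kw a p w x) * normpw a b p w v \<le> normpw a b p w (kw a p w x) * (\<kappa> 2 ^ m * normpw a b p w h)"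
    by (intro mult_left_mono normpw_nonneg)
  then show ?thesis
    using ipw_Cauchy_Schwarz[OF kx v] kx_v by (simp add: h_def)
qed

lemma Lt_iterate_approx:
  assumes x: "x \<in> I" and kx: "L2pw a b p w (kw a p w x)" and g: "E2 a b p w g" and k: "k \<ge> 1"
  shows "\<bar>(Lt a b p w ^^ k) g x - ipw a b p w g (e 1) * e 1 x * Cpw a b p w ^ k\<bar>
    \<le> normpw a b p w (kw a p w x) * normpw a b p w (\<lambda>y. g y - ipw a b p w g (e 1) * e 1 y) * \<kappa> 2 ^ (k - 1)"
proof -
  define f where "f = (Lt a b p w ^^ (k - 1)) g"
  have Lt_f: "Lt a b p w f = (Lt a b p w ^^ k) g" unfolding f_def using k by (cases k) auto
  have f_coeff: "ipw a b p w f (e i) = \<kappa> i ^ (k - 1) * ipw a b p w g (e i)" if "i \<ge> 1" for i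
    unfolding f_def using ipw_Lt_iterate_e[OF g that] .
  define \<alpha> where "\<alpha> = ipw a b p w g (e 1) * e 1 x * Cpw a b p w ^ k"
  define tail where "tail N = (\<Sum>i\<in>{2..N}. (\<kappa> i ^ (k - 1) * ipw a b p w g (e i)) * (\<kappa> i * e i x))" for N
  have "(\<lambda>N. \<Sum>i=1..N. ipw a b p w f (e i) * (\<kappa> i * e i x)) \<longlonglongrightarrow> (Lt a b p w ^^ k) g x"
    using Lt_eigen_expansion[OF x kx E2_Lt_iterate[OF g, of "k - 1"]] Lt_f unfolding f_def by simp
  moreover have "\<forall>\<^sub>F N in sequentially. (\<Sum>i=1..N. ipw a b p w f (e i) * (\<kappa> i * e i x)) = \<alpha> + tail N"
  proof (rule eventually_sequentiallyI)
    fix N :: nat assume "1 \<le> N"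
    then have "(\<Sum>i=1..N. ipw a b p w f (e i) * (\<kappa> i * e i x))
        = ipw a b p w f (e 1) * (\<kappa> 1 * e 1 x) + (\<Sum>i\<in>{2..N}. ipw a b p w f (e i) * (\<kappa> i * e i x))"
      by (simp add: sum.atLeast_Suc_atMost numeral_2_eq_2)
    then show "(\<Sum>i=1..N. ipw a b p w f (e i) * (\<kappa> i * e i x)) = \<alpha> + tail N"
      using f_coeff k kappa_1 unfolding \<alpha>_def tail_def by (cases k) (simp_all add: ac_simps)
  qed
  ultimately have "(\<lambda>N. \<alpha> + tail N) \<longlonglongrightarrow> (Lt a b p w ^^ k) g x"
    by (rule Lim_transform_eventually)
  then have "(\<lambda>N. \<bar>(\<alpha> + tail N) - \<alpha>\<bar>) \<longlonglongrightarrow> \<bar>(Lt a b p w ^^ k) g x - \<alpha>\<bar>"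
    by (intro tendsto_intros)
  moreover have "\<bar>(\<alpha> + tail N) - \<alpha>\<bar>
      \<le> normpw a b p w (kw a p w x) * normpw a b p w (\<lambda>y. g y - ipw a b p w g (e 1) * e 1 y) * \<kappa> 2 ^ (k - 1)" for N
    using eigen_tail_bound[OF x kx, of g, where N = N and m = "k - 1"] g unfolding E2_def tail_def by (simp add: ac_simps)
  ultimately show ?thesis
    unfolding \<alpha>_def by (intro LIMSEQ_le_const2) auto
qed

end

theorem proposition3p9:
  fixes a b :: ereal and p w :: "real \<Rightarrow> real"
    and \<kappa> :: "nat \<Rightarrow> real" and e :: "nat \<Rightarrow> real \<Rightarrow> real"
    and x :: real and g0 :: "real \<Rightarrow> real" and n :: nat
  assumes dens: "is_prob_density a b p"
    and weight: "is_weight a b p w"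
    and h1: "H1 a b p w" and h2: "H2 a b p w"
    and cpt: "Lt_compact a b p w"
    and eig: "eigensystem a b p w \<kappa> e"
    and xI: "x \<in> einterval a b"
    and kx: "L2pw a b p w (kw a p w x)"
    and g0: "E2 a b p w g0"
    and a1: "ipw a b p w g0 (e 1) \<noteq> 0"
    and n: "n \<ge> 1"
    and Bn: "normpw a b p w (kw a p w x)
               * normpw a b p w (\<lambda>y. g0 y - ipw a b p w g0 (e 1) * e 1 y)
               * (\<kappa> 2 / Cpw a b p w) ^ (n - 1)
             < Cpw a b p w * \<bar>ipw a b p w g0 (e 1) * e 1 x\<bar>"
  shows "(let B = normpw a b p w (kw a p w x)
               * normpw a b p w (\<lambda>y. g0 y - ipw a b p w g0 (e 1) * e 1 y)
               * (\<kappa> 2 / Cpw a b p w) ^ (n - 1)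
          in \<bar>(Lt a b p w ^^ (n + 1)) g0 x / (Lt a b p w ^^ n) g0 x - Cpw a b p w\<bar>
             \<le> (if B = 0 then 0
                 else 2 * inverse (\<bar>ipw a b p w g0 (e 1) * e 1 x\<bar> / B - 1 / Cpw a b p w)))"
proof -
  interpret compact_eigensystem a b p w \<kappa> e
    using dens weight h1 h2 cpt eig by unfold_locales
  have C: "Cpw a b p w > 0" using kappa_pos[of 1] kappa_1 by simp
  have \<kappa>2: "0 \<le> \<kappa> 2" using kappa_pos[of 2] by simp
  have M: "0 \<le> normpw a b p w (kw a p w x) * normpw a b p w (\<lambda>y. g0 y - ipw a b p w g0 (e 1) * e 1 y)"
    by (simp add: normpw_nonneg)
  have u: "\<bar>(Lt a b p w ^^ (n + 1)) g0 x - ipw a b p w g0 (e 1) * e 1 x * Cpw a b p w ^ (n + 1)\<bar>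
      \<le> normpw a b p w (kw a p w x) * normpw a b p w (\<lambda>y. g0 y - ipw a b p w g0 (e 1) * e 1 y) * \<kappa> 2 ^ n"
    using Lt_iterate_approx[OF xI kx g0, of "n + 1"] by simp
  show ?thesis
    unfolding Let_def
    by (rule ratio_perturbation_bound[OF C n \<kappa>2 kappa_2_le_Cpw M Lt_iterate_approx[OF xI kx g0 n] u Bn])
qed
end
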